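(* Let $x\in X$, $n\in \mathbb{Z}^k$ and $a\in \mathbb{R}^k$. (1) If $\phi(T^nx)>0$, then $B_{M/2}(n,1/\phi(T^nx))\subset V(x,n)$, where $B_{M/2}(\cdot)$ denotes the closed Euclidean ball of radius $M/2$ in $\mathbb{R}^{k+1}$. (2) If $W(x,n)$ is non-empty, then $1\leq 1/\phi(T^nx)\leq 2$. (3) If $(a,-H)\in V(x,n)$, i.e. $a\in W(x,n)$, then $|a-n|<L+\sqrt{k}$. (4) Let $s>1$ and $r>0$. One can choose $M$ sufficiently large depending on $s,r$ (and then choose the integer $L\geq M$, the function $\phi$ and the number $H\geq (L+\sqrt{k})^2$ for this $M$ as in the setting described in the context) so that, for all $x\in X$, $n\in\mathbb{Z}^k$, $a\in\mathbb{R}^k$: if $(a,-sH)\in V(x,n)$ then $B_r(a/s+(1-1/s)n)\subset W(x,n)$.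
   Context: Let $(X,\mathbb{Z}^k,T)$ be a dynamical system ($X$ a compact metric space with a continuous $\mathbb{Z}^k$-action) having the marker property: for every finite $F\subset\mathbb{Z}^k$ there is an open $U\subset X$ with $X=\bigcup_{n\in\mathbb{Z}^k}T^nU$ and $U\cap T^nU=\emptyset$ for all nonzero $n\in F$. Let $M$ be a positive integer. Fix an integer $L\geq M$ and a continuous function $\phi:X\to[0,1]$ such that: (i) if $\phi(x)>0$ then $\phi(T^nx)=0$ for all nonzero $n\in\mathbb{Z}^k$ with $|n|<M$; (ii) for every $x\in X$ there is $n\in\mathbb{Z}^k$ with $|n|<L$ and $\phi(T^nx)=1$ (such $L,\phi$ exist by the marker property). For $x\in X$ and $n\in\mathbb{Z}^k$ with $\phi(T^nx)\neq 0$, let $V(x,n)\subset\mathbb{R}^{k+1}$ be the Voronoi cell of the center $(n,1/\phi(T^nx))$ with respect to the set of centers $\{(m,1/\phi(T^mx)) : m\in\mathbb{Z}^k,\ \phi(T^mx)\neq0\}$, i.e. the set of $u\in\mathbb{R}^{k+1}$ with $|u-(n,1/\phi(T^nx))|\leq|u-(m,1/\phi(T^mx))|$ for all such $m$ ($|\cdot|$ the Euclidean norm); if $\phi(T^nx)=0$ set $V(x,n)=\emptyset$. Choose a real number $H\geq(L+\sqrt{k})^2$ and let $W(x,n)$ be the projection to the first $k$ coordinates of $V(x,n)\cap(\mathbb{R}^k\times\{-H\})$. Then $\mathbb{R}^k=\bigcup_{n\in\mathbb{Z}^k}W(x,n)$. $B_r(\cdot)$ denotes the closed Euclidean ball of radius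 $r$. *)

theory Defs
  imports "HOL-Analysis.Analysis"
begin

text \<open>Lattice points of Z^k are modelled as int^'k; zvec embeds them into R^k = real^'k.
  R^(k+1) is modelled as real^'k \<times> real (the product norm is Euclidean).\<close>

definition zvec :: "int^'k \<Rightarrow> real^'k" where
  "zvec n = (\<chi> i. real_of_int (n $ i))"

definition zk_system :: "'a::metric_space set \<Rightarrow> (int^'k \<Rightarrow> 'a \<Rightarrow> 'a) \<Rightarrow> bool" where
  "zk_system X T \<longleftrightarrow> compact X \<and>
     (\<forall>n. T n ` X \<subseteq> X \<and> continuous_on X (T n)) \<and>
     (\<forall>x\<in>X. T 0 x = x) \<and>
     (\<forall>m n. \<forall>x\<in>X. T (m + n) x = T m (T n x))"

definition marker_property :: "'a::metric_space set \<Rightarrow> (int^'k \<Rightarrow> 'a \<Rightarrow> 'a) \<Rightarrow> bool" where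
  "marker_property X T \<longleftrightarrow>
     (\<forall>F. finite F \<longrightarrow> (\<exists>U. openin (top_of_set X) U \<and> X = (\<Union>n. T n ` U) \<and>
        (\<forall>n\<in>F. n \<noteq> 0 \<longrightarrow> U \<inter> T n ` U = {})))"

definition good_setting ::
  "'a::metric_space set \<Rightarrow> (int^'k \<Rightarrow> 'a \<Rightarrow> 'a) \<Rightarrow> nat \<Rightarrow> nat \<Rightarrow> ('a \<Rightarrow> real) \<Rightarrow> real \<Rightarrow> bool" where
  "good_setting X T M L \<phi> H \<longleftrightarrow>
     M \<ge> 1 \<and> L \<ge> M \<and> continuous_on X \<phi> \<and> \<phi> ` X \<subseteq> {0..1} \<and>
     (\<forall>x\<in>X. \<phi> x > 0 \<longrightarrow> (\<forall>n. n \<noteq> 0 \<and> norm (zvec n) < real M \<longrightarrow> \<phi> (T n x) = 0)) \<and>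
     (\<forall>x\<in>X. \<exists>n. norm (zvec n) < real L \<and> \<phi> (T n x) = 1) \<and>
     H \<ge> (real L + sqrt (real CARD('k)))\<^sup>2"

definition voronoi :: "(int^'k \<Rightarrow> 'a \<Rightarrow> 'a) \<Rightarrow> ('a \<Rightarrow> real) \<Rightarrow> 'a \<Rightarrow> int^'k \<Rightarrow> ((real^'k) \<times> real) set" where
  "voronoi T \<phi> x n =
     (if \<phi> (T n x) = 0 then {}
      else {u. \<forall>m. \<phi> (T m x) \<noteq> 0 \<longrightarrow>
              norm (u - (zvec n, 1 / \<phi> (T n x))) \<le> norm (u - (zvec m, 1 / \<phi> (T m x)))})"

definition wcell :: "(int^'k \<Rightarrow> 'a \<Rightarrow> 'a) \<Rightarrow> ('a \<Rightarrow> real) \<Rightarrow> real \<Rightarrow> 'a \<Rightarrow> int^'k \<Rightarrow> (real^'k) set" where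
  "wcell T \<phi> H x n = {a. (a, - H) \<in> voronoi T \<phi> x n}"

end

theory Submission
  imports Defs
begin

text \<open>The marker centres are \<open>M\<close>-separated, so the ball of radius \<open>M/2\<close> about a centre lies in
  its Voronoi cell. If \<open>(a,-h)\<close> with \<open>h \<ge> H\<close> lies in the cell of a centre of height \<open>t \<ge> 1\<close>, compare
  it with a centre of height 1 within distance \<open>L + \<surd>k\<close> of \<open>a\<close>: the vertical terms differ by
  \<open>(t - 1)(2h + t + 1)\<close>, while the horizontal term is below \<open>(L + \<surd>k)\<^sup>2 \<le> h\<close>; this forces \<open>t \<le> 2\<close>
  and makes the own centre horizontally closer to \<open>a\<close>. For (4), cells are convex, so with \<open>(a,-sH)\<close>
  a cell contains the image of the \<open>M/2\<close>-ball about its centre under the homothety with centre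
  \<open>(a,-sH)\<close> and ratio \<open>1 - 1/s\<close>; for large \<open>M\<close> this image contains the required ball at height \<open>-H\<close>.\<close>

lemma norm_diff_le_norm_diff_iff_inner:
  fixes c d w :: "'b::real_inner"
  shows "norm (w - c) \<le> norm (w - d) \<longleftrightarrow> inner (2 *\<^sub>R (d - c)) w \<le> inner d d - inner c c"
proof -
  have "norm (w - c) \<le> norm (w - d) \<longleftrightarrow> (norm (w - c))\<^sup>2 \<le> (norm (w - d))\<^sup>2"
    by (simp add: abs_le_square_iff)
  also have "\<dots> \<longleftrightarrow> inner (w - c) (w - c) \<le> inner (w - d) (w - d)"
    by (simp add: power2_norm_eq_inner)
  also have "\<dots> \<longleftrightarrow> inner (2 *\<^sub>R (d - c)) w \<le> inner d d - inner c c"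
    by (simp add: inner_diff_left inner_diff_right inner_commute algebra_simps)
  finally show ?thesis .
qed

lemma convex_closer_to:
  fixes c d :: "'b::real_inner"
  shows "convex {w. norm (w - c) \<le> norm (w - d)}"
  unfolding norm_diff_le_norm_diff_iff_inner by (rule convex_halfspace_le)

lemma cball_half_separation_subset_closer:
  fixes c :: "'b::real_normed_vector"
  assumes "\<And>d. d \<in> D \<Longrightarrow> d \<noteq> c \<Longrightarrow> \<delta> \<le> norm (d - c)"
  shows "cball c (\<delta> / 2) \<subseteq> {u. \<forall>d\<in>D. norm (u - c) \<le> norm (u - d)}"
proof (intro subsetI CollectI ballI)
  fix u d assume u: "u \<in> cball c (\<delta> / 2)" and d: "d \<in> D"
  have uc: "norm (u - c) \<le> \<delta> / 2"
    using u by (simp add: dist_norm norm_minus_commute)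
  show "norm (u - c) \<le> norm (u - d)"
  proof (cases "d = c")
    case False
    have "\<delta> \<le> norm (d - c)" using assms d False by blast
    also have "\<dots> \<le> norm (u - d) + norm (u - c)"
      using norm_triangle_ineq4[of "u - c" "u - d"] by (simp add: algebra_simps)
    finally show ?thesis using uc by linarith
  qed simp
qed

lemma convex_cball_combination_subset:
  fixes u c :: "'b::real_normed_vector"
  assumes "convex S" "u \<in> S" "cball c \<rho> \<subseteq> S" "0 < \<mu>" "\<mu> \<le> 1"
  shows "cball ((1 - \<mu>) *\<^sub>R u + \<mu> *\<^sub>R c) (\<mu> * \<rho>) \<subseteq> S"
proof
  fix y assume y: "y \<in> cball ((1 - \<mu>) *\<^sub>R u + \<mu> *\<^sub>R c) (\<mu> * \<rho>)"
  define v where "v = c + (1 / \<mu>) *\<^sub>R (y - (1 - \<mu>) *\<^sub>R u - \<mu> *\<^sub>R c)"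
  have "norm (y - ((1 - \<mu>) *\<^sub>R u + \<mu> *\<^sub>R c)) \<le> \<mu> * \<rho>"
    using y by (simp add: dist_norm norm_minus_commute)
  then have "norm (y - (1 - \<mu>) *\<^sub>R u - \<mu> *\<^sub>R c) / \<mu> \<le> \<rho>"
    using \<open>0 < \<mu>\<close> by (simp add: pos_divide_le_eq diff_diff_eq mult.commute)
  then have "dist c v \<le> \<rho>"
    using \<open>0 < \<mu>\<close> by (simp add: v_def dist_norm)
  then have "v \<in> S" using assms(3) by auto
  moreover have "y = (1 - \<mu>) *\<^sub>R u + \<mu> *\<^sub>R v"
    using \<open>0 < \<mu>\<close> by (simp add: v_def scaleR_add_right)
  ultimately show "y \<in> S"
    using convexD[OF assms(1,2), of v "1 - \<mu>" \<mu>] assms(5) \<open>0 < \<mu>\<close> by simp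
qed

lemma closer_lifted_centre_bounds:
  fixes a p q :: "'b::real_normed_vector" and h t :: real
  assumes closer: "norm ((a, -h) - (p, t)) \<le> norm ((a, -h) - (q, 1))"
    and "1 \<le> t" and low: "(norm (a - q))\<^sup>2 < h"
  shows "t \<le> 2 \<and> norm (a - p) \<le> norm (a - q)"
proof -
  have "(norm (a - p))\<^sup>2 + (h + t)\<^sup>2 \<le> (norm (a - q))\<^sup>2 + (h + 1)\<^sup>2"
    using closer by (simp add: norm_Pair power2_commute algebra_simps)
  moreover have "(h + t)\<^sup>2 - (h + 1)\<^sup>2 = (t - 1) * (2 * h + t + 1)"
    by (simp add: power2_eq_square algebra_simps)
  moreover have "0 < h" using low zero_le_power2[of "norm (a - q)"] by linarith
  ultimately have gain: "(norm (a - p))\<^sup>2 + (t - 1) * (2 * h + t + 1) \<le> (norm (a - q))\<^sup>2"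
    by linarith
  have "t \<le> 2"
  proof (rule ccontr)
    assume "\<not> t \<le> 2"
    then have "2 * h + t + 1 \<le> (t - 1) * (2 * h + t + 1)"
      using mult_right_mono[of 1 "t - 1" "2 * h + t + 1"] \<open>0 < h\<close> by simp
    then show False using gain low \<open>0 < h\<close> \<open>1 \<le> t\<close> zero_le_power2[of "norm (a - p)"] by linarith
  qed
  moreover have "0 \<le> (t - 1) * (2 * h + t + 1)"
    using \<open>1 \<le> t\<close> \<open>0 < h\<close> by simp
  then have "(norm (a - p))\<^sup>2 \<le> (norm (a - q))\<^sup>2" using gain by linarith
  then have "norm (a - p) \<le> norm (a - q)" by (rule power2_le_imp_le) simp
  ultimately show ?thesis by simp
qed

lemma zvec_diff [simp]: "zvec (m - n) = zvec m - zvec n"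
  and zvec_add [simp]: "zvec (m + n) = zvec m + zvec n"
  by (auto simp: zvec_def vec_eq_iff)

lemma norm_diff_zvec_floor_le:
  fixes a :: "real^'k"
  shows "norm (a - zvec (\<chi> i. \<lfloor>a $ i\<rfloor>)) \<le> sqrt (real CARD('k))"
proof -
  have "norm (a - zvec (\<chi> i. \<lfloor>a $ i\<rfloor>)) = L2_set (\<lambda>i. dist (a $ i) (of_int \<lfloor>a $ i\<rfloor>)) UNIV"
    by (simp add: dist_norm[symmetric] dist_vec_def zvec_def)
  also have "\<dots> \<le> L2_set (\<lambda>i::'k. 1) UNIV"
    by (rule L2_set_mono) (auto simp: dist_real_def, linarith)
  also have "\<dots> = sqrt (real CARD('k))"
    by (simp add: L2_set_constant)
  finally show ?thesis .
qed

lemma zk_system_mem: "zk_system X T \<Longrightarrow> x \<in> X \<Longrightarrow> T m x \<in> X"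
  unfolding zk_system_def by blast

lemma zk_system_add: "zk_system X T \<Longrightarrow> x \<in> X \<Longrightarrow> T (m + n) x = T m (T n x)"
  unfolding zk_system_def by blast

lemma good_setting_phi_bounds:
  assumes "zk_system X T" "good_setting X T M L \<phi> H" "x \<in> X"
  shows "0 \<le> \<phi> (T m x) \<and> \<phi> (T m x) \<le> 1"
  using zk_system_mem[OF assms(1,3), of m] assms(2) unfolding good_setting_def by auto

lemma good_setting_centres_separated:
  assumes sys: "zk_system X T" and gs: "good_setting X T M L \<phi> H" and "x \<in> X"
    and "\<phi> (T n x) \<noteq> 0" "\<phi> (T m x) \<noteq> 0" "m \<noteq> n"
  shows "real M \<le> norm (zvec m - zvec n)"
proof (rule ccontr)
  assume "\<not> ?thesis"
  then have "norm (zvec (m - n)) < real M" by simp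
  moreover have "\<phi> (T n x) > 0" "T n x \<in> X"
    using good_setting_phi_bounds[OF sys gs \<open>x \<in> X\<close>, of n] \<open>\<phi> (T n x) \<noteq> 0\<close>
      zk_system_mem[OF sys \<open>x \<in> X\<close>] by auto
  moreover have "\<forall>y\<in>X. \<phi> y > 0 \<longrightarrow> (\<forall>d. d \<noteq> 0 \<and> norm (zvec d) < real M \<longrightarrow> \<phi> (T d y) = 0)"
    using gs unfolding good_setting_def by blast
  ultimately have "\<phi> (T (m - n) (T n x)) = 0"
    using \<open>m \<noteq> n\<close> by simp
  moreover have "T (m - n) (T n x) = T m x"
    using zk_system_add[OF sys \<open>x \<in> X\<close>, of "m - n" n] by simp
  ultimately show False using \<open>\<phi> (T m x) \<noteq> 0\<close> by simp
qed

lemma good_setting_exists_unit_centre_near: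
  fixes a :: "real^'k"
  assumes sys: "zk_system X T" and gs: "good_setting X T M L \<phi> H" and "x \<in> X"
  shows "\<exists>m. \<phi> (T m x) = 1 \<and> norm (a - zvec m) < real L + sqrt (real CARD('k))"
proof -
  define p :: "int^'k" where "p = (\<chi> i. \<lfloor>a $ i\<rfloor>)"
  have "T p x \<in> X" using zk_system_mem[OF sys \<open>x \<in> X\<close>] .
  moreover have "\<forall>y\<in>X. \<exists>d. norm (zvec d) < real L \<and> \<phi> (T d y) = 1"
    using gs unfolding good_setting_def by blast
  ultimately obtain d where d: "norm (zvec d) < real L" "\<phi> (T d (T p x)) = 1"
    by blast
  have "T d (T p x) = T (d + p) x" using zk_system_add[OF sys \<open>x \<in> X\<close>] by simp
  moreover have "norm (a - zvec (d + p)) \<le> norm (a - zvec p) + norm (zvec d)"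
    using norm_triangle_ineq4[of "a - zvec p" "zvec d"] by (simp add: algebra_simps)
  moreover have "norm (a - zvec p) \<le> sqrt (real CARD('k))"
    unfolding p_def by (rule norm_diff_zvec_floor_le)
  ultimately show ?thesis
    using d by (intro exI[of _ "d + p"]) (simp add: add.commute)
qed

definition marker_centres :: "(int^'k \<Rightarrow> 'a \<Rightarrow> 'a) \<Rightarrow> ('a \<Rightarrow> real) \<Rightarrow> 'a \<Rightarrow> ((real^'k) \<times> real) set"
  where "marker_centres T \<phi> x = {(zvec m, 1 / \<phi> (T m x)) | m. \<phi> (T m x) \<noteq> 0}"

lemma voronoi_eq_closer:
  assumes "\<phi> (T n x) \<noteq> 0"
  shows "voronoi T \<phi> x n =
    {u. \<forall>d\<in>marker_centres T \<phi> x. norm (u - (zvec n, 1 / \<phi> (T n x))) \<le> norm (u - d)}"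
  using assms unfolding voronoi_def marker_centres_def by auto

lemma voronoi_nonempty_phi_nonzero: "u \<in> voronoi T \<phi> x n \<Longrightarrow> \<phi> (T n x) \<noteq> 0"
  unfolding voronoi_def by (auto split: if_splits)

lemma convex_voronoi: "convex (voronoi T \<phi> x n)"
proof (cases "\<phi> (T n x) = 0")
  case False
  let ?c = "(zvec n, 1 / \<phi> (T n x))"
  have "voronoi T \<phi> x n = (\<Inter>d\<in>marker_centres T \<phi> x. {u. norm (u - ?c) \<le> norm (u - d)})"
    using voronoi_eq_closer[of \<phi> T n x, OF False] by auto
  then show ?thesis by (auto intro: convex_INT convex_closer_to)
qed (simp add: voronoi_def)

lemma cball_subset_voronoi:
  assumes sys: "zk_system X T" and gs: "good_setting X T M L \<phi> H" and "x \<in> X"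
    and "\<phi> (T n x) > 0"
  shows "cball (zvec n, 1 / \<phi> (T n x)) (real M / 2) \<subseteq> voronoi T \<phi> x n"
proof -
  let ?c = "(zvec n, 1 / \<phi> (T n x))"
  have "real M \<le> norm (d - ?c)" if d_mem: "d \<in> marker_centres T \<phi> x" and d_ne: "d \<noteq> ?c" for d
  proof -
    obtain m where d: "d = (zvec m, 1 / \<phi> (T m x))" "\<phi> (T m x) \<noteq> 0"
      using d_mem unfolding marker_centres_def by blast
    then have "m \<noteq> n" using d_ne by auto
    then have "real M \<le> norm (zvec m - zvec n)"
      using good_setting_centres_separated[OF sys gs \<open>x \<in> X\<close>] d(2) \<open>\<phi> (T n x) > 0\<close> by simp
    also have "\<dots> \<le> norm (zvec m - zvec n, 1 / \<phi> (T m x) - 1 / \<phi> (T n x))"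
      by (rule norm_fst_le)
    also have "\<dots> = norm (d - ?c)"
      using d(1) by simp
    finally show ?thesis .
  qed
  then show ?thesis
    using cball_half_separation_subset_closer[of "marker_centres T \<phi> x" ?c "real M"]
      voronoi_eq_closer[of \<phi> T n x] \<open>\<phi> (T n x) > 0\<close> by simp
qed

lemma voronoi_far_below_bounds:
  fixes a :: "real^'k"
  assumes sys: "zk_system X T" and gs: "good_setting X T M L \<phi> H" and "x \<in> X"
    and a: "(a, - h) \<in> voronoi T \<phi> x n" and "H \<le> h"
  shows "\<phi> (T n x) > 0 \<and> 1 \<le> 1 / \<phi> (T n x) \<and> 1 / \<phi> (T n x) \<le> 2 \<and>
    norm (a - zvec n) < real L + sqrt (real CARD('k))"
proof -
  define t where "t = 1 / \<phi> (T n x)"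
  have "\<phi> (T n x) \<noteq> 0" using voronoi_nonempty_phi_nonzero[OF a] .
  then have pos: "\<phi> (T n x) > 0" and "1 \<le> t"
    using good_setting_phi_bounds[OF sys gs \<open>x \<in> X\<close>, of n] by (auto simp: t_def)
  obtain m where m: "\<phi> (T m x) = 1" and near: "norm (a - zvec m) < real L + sqrt (real CARD('k))"
    using good_setting_exists_unit_centre_near[OF sys gs \<open>x \<in> X\<close>] by blast
  have "\<forall>d\<in>marker_centres T \<phi> x. norm ((a, - h) - (zvec n, t)) \<le> norm ((a, - h) - d)"
    using a voronoi_eq_closer[of \<phi> T n x, OF \<open>\<phi> (T n x) \<noteq> 0\<close>] by (simp add: t_def)
  moreover have "(zvec m, 1) \<in> marker_centres T \<phi> x"
    unfolding marker_centres_def using m by force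
  ultimately have closer: "norm ((a, - h) - (zvec n, t)) \<le> norm ((a, - h) - (zvec m, 1))"
    by blast
  have "(norm (a - zvec m))\<^sup>2 < (real L + sqrt (real CARD('k)))\<^sup>2"
    using near by (intro power_strict_mono) auto
  also have "\<dots> \<le> h"
    using gs \<open>H \<le> h\<close> unfolding good_setting_def by linarith
  finally have "t \<le> 2 \<and> norm (a - zvec n) \<le> norm (a - zvec m)"
    using closer_lifted_centre_bounds[OF closer \<open>1 \<le> t\<close>] by blast
  then show ?thesis using pos \<open>1 \<le> t\<close> near by (auto simp: t_def)
qed

lemma cball_rescaled_subset_wcell:
  fixes a :: "real^'k"
  assumes sys: "zk_system X T" and gs: "good_setting X T M L \<phi> H" and "x \<in> X"
    and "1 < s" and M: "2 * sqrt (r\<^sup>2 + 4) / (1 - 1 / s) \<le> real M"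
    and u: "(a, - (s * H)) \<in> voronoi T \<phi> x n"
  shows "cball (a /\<^sub>R s + (1 - 1 / s) *\<^sub>R zvec n) r \<subseteq> wcell T \<phi> H x n"
proof
  fix b assume b: "b \<in> cball (a /\<^sub>R s + (1 - 1 / s) *\<^sub>R zvec n) r"
  define \<mu> where "\<mu> = 1 - 1 / s"
  define t where "t = 1 / \<phi> (T n x)"
  have \<mu>: "0 < \<mu>" "\<mu> \<le> 1" and inv_s: "1 - \<mu> = 1 / s"
    using \<open>1 < s\<close> by (auto simp: \<mu>_def)
  have "0 \<le> H"
    using gs zero_le_power2[of "real L + sqrt (real CARD('k))"] unfolding good_setting_def by linarith
  then have "H \<le> s * H" using \<open>1 < s\<close> mult_right_mono[of 1 s H] by simp
  then have t: "0 < \<phi> (T n x)" "1 \<le> t" "t \<le> 2"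
    using voronoi_far_below_bounds[OF sys gs \<open>x \<in> X\<close> u] by (auto simp: t_def)
  have "cball ((1 - \<mu>) *\<^sub>R (a, - (s * H)) + \<mu> *\<^sub>R (zvec n, t)) (\<mu> * (real M / 2))
      \<subseteq> voronoi T \<phi> x n"
    using convex_cball_combination_subset[OF convex_voronoi u
        cball_subset_voronoi[OF sys gs \<open>x \<in> X\<close> t(1)] \<mu>]
    by (simp add: t_def)
  moreover have "(b, - H) \<in> cball ((1 - \<mu>) *\<^sub>R (a, - (s * H)) + \<mu> *\<^sub>R (zvec n, t)) (\<mu> * (real M / 2))"
  proof -
    have centre: "(1 - \<mu>) *\<^sub>R (a, - (s * H)) + \<mu> *\<^sub>R (zvec n, t)
        = (a /\<^sub>R s + \<mu> *\<^sub>R zvec n, - H + \<mu> * t)"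
      using \<open>1 < s\<close> by (simp add: inv_s inverse_eq_divide)
    have "dist ((1 - \<mu>) *\<^sub>R (a, - (s * H)) + \<mu> *\<^sub>R (zvec n, t)) (b, - H)
        = sqrt ((dist (a /\<^sub>R s + \<mu> *\<^sub>R zvec n) b)\<^sup>2 + (\<mu> * t)\<^sup>2)"
      unfolding centre by (simp add: dist_Pair_Pair dist_real_def)
    also have "\<dots> \<le> sqrt (r\<^sup>2 + 2\<^sup>2)"
    proof -
      have "dist (a /\<^sub>R s + \<mu> *\<^sub>R zvec n) b \<le> r" using b by (simp add: \<mu>_def)
      moreover have "\<mu> * t \<le> 2" using \<mu> t mult_mono[of \<mu> 1 t 2] by simp
      ultimately show ?thesis
        using \<mu> t by (intro real_sqrt_le_mono add_mono power_mono) auto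
    qed
    also have "\<dots> \<le> \<mu> * (real M / 2)"
      using M \<mu> by (simp add: \<mu>_def pos_divide_le_eq mult.commute)
    finally show ?thesis by (simp add: mem_cball)
  qed
  ultimately show "b \<in> wcell T \<phi> H x n"
    unfolding wcell_def by blast
qed

theorem lemma4p1:
  fixes X :: "'a::metric_space set" and T :: "int^'k \<Rightarrow> 'a \<Rightarrow> 'a"
  assumes "zk_system X T" and "marker_property X T"
  shows "(\<forall>M L \<phi> H. good_setting X T M L \<phi> H \<longrightarrow>
            (\<forall>x\<in>X. \<forall>n. \<forall>a.
               (\<phi> (T n x) > 0 \<longrightarrow>
                  cball (zvec n, 1 / \<phi> (T n x)) (real M / 2) \<subseteq> voronoi T \<phi> x n) \<and>
               (wcell T \<phi> H x n \<noteq> {} \<longrightarrow> 1 \<le> 1 / \<phi> (T n x) \<and> 1 / \<phi> (T n x) \<le> 2) \<and>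
               ((a, - H) \<in> voronoi T \<phi> x n \<longrightarrow>
                  norm (a - zvec n) < real L + sqrt (real CARD('k)))))
       \<and>
       (\<forall>s r. s > 1 \<and> r > (0::real) \<longrightarrow>
          (\<exists>M0::nat. \<forall>M L \<phi> H. M \<ge> M0 \<and> good_setting X T M L \<phi> H \<longrightarrow>
             (\<forall>x\<in>X. \<forall>n. \<forall>a.
                (a, - (s * H)) \<in> voronoi T \<phi> x n \<longrightarrow>
                cball (a /\<^sub>R s + (1 - 1 / s) *\<^sub>R zvec n) r \<subseteq> wcell T \<phi> H x n)))"
proof (intro conjI allI impI)
  fix M L \<phi> H assume gs: "good_setting X T M L \<phi> H"
  show "\<forall>x\<in>X. \<forall>n a.
      (0 < \<phi> (T n x) \<longrightarrow> cball (zvec n, 1 / \<phi> (T n x)) (real M / 2) \<subseteq> voronoi T \<phi> x n) \<and>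
      (wcell T \<phi> H x n \<noteq> {} \<longrightarrow> 1 \<le> 1 / \<phi> (T n x) \<and> 1 / \<phi> (T n x) \<le> 2) \<and>
      ((a, - H) \<in> voronoi T \<phi> x n \<longrightarrow> norm (a - zvec n) < real L + sqrt (real CARD('k)))"
  proof (intro ballI allI conjI impI)
    fix x n a assume x: "x \<in> X"
    note far_below = voronoi_far_below_bounds[OF assms(1) gs x _ order_refl]
    show "0 < \<phi> (T n x) \<Longrightarrow> cball (zvec n, 1 / \<phi> (T n x)) (real M / 2) \<subseteq> voronoi T \<phi> x n"
      by (rule cball_subset_voronoi[OF assms(1) gs x])
    show "(a, - H) \<in> voronoi T \<phi> x n \<Longrightarrow> norm (a - zvec n) < real L + sqrt (real CARD('k))"
      using far_below by blast
    assume "wcell T \<phi> H x n \<noteq> {}"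
    then obtain b where "(b, - H) \<in> voronoi T \<phi> x n" unfolding wcell_def by blast
    then show "1 \<le> 1 / \<phi> (T n x)" and "1 / \<phi> (T n x) \<le> 2" using far_below by blast+
  qed
next
  fix s r :: real assume "1 < s \<and> 0 < r"
  define M0 where "M0 = nat \<lceil>2 * sqrt (r\<^sup>2 + 4) / (1 - 1 / s)\<rceil>"
  have "2 * sqrt (r\<^sup>2 + 4) / (1 - 1 / s) \<le> real M" if "M0 \<le> M" for M
    using real_nat_ceiling_ge order_trans of_nat_le_iff that unfolding M0_def by metis
  then show "\<exists>M0. \<forall>M L \<phi> H. M0 \<le> M \<and> good_setting X T M L \<phi> H \<longrightarrow>
      (\<forall>x\<in>X. \<forall>n a. (a, - (s * H)) \<in> voronoi T \<phi> x n \<longrightarrow>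
        cball (a /\<^sub>R s + (1 - 1 / s) *\<^sub>R zvec n) r \<subseteq> wcell T \<phi> H x n)"
    using cball_rescaled_subset_wcell[OF assms(1)] \<open>1 < s \<and> 0 < r\<close> by blast
qed

end
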